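(* Let $n\ge3$ and let $\mathbf M_n$ be the lattice with elements $0,a_1,\dots,a_n,1$, where $0<a_i<1$ for all $i$ and the $a_i$ are pairwise incomparable. Let $\pi$ be a permutation of $\{a_1,\dots,a_n\}$ with $\pi(a_i)\ne a_i$ for all $i$, and define $0':=1$, $1':=0$, $a_i':=\pi(a_i)$. Then $(M_n,\vee,\wedge,{}',0,1)$ is a finite subdirectly irreducible member of $\mathcal V$. Consequently $\mathcal V$ has infinitely many pairwise non-isomorphic finite subdirectly irreducible members.
   Context: $\mathcal V$ is the variety of algebras $(L,\vee,\wedge,{}',0,1)$ that are bounded lattices with a complementation $'$ (i.e. $x\vee x'\approx1$, $x\wedge x'\approx0$) satisfying the identities $x\vee y'\approx y'\vee\big((x\vee y')\wedge y\big)$ and $x\wedge y\approx x\wedge\big((x\wedge y)\vee x'\big)$. *)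

theory Defs
  imports Main
begin

record 'a cl_alg =
  carrier :: "'a set"
  join :: "'a \<Rightarrow> 'a \<Rightarrow> 'a"
  meet :: "'a \<Rightarrow> 'a \<Rightarrow> 'a"
  cmp  :: "'a \<Rightarrow> 'a"
  zero :: 'a
  one  :: 'a

definition closed_alg :: "'a cl_alg \<Rightarrow> bool" where
  "closed_alg A \<longleftrightarrow>
     zero A \<in> carrier A \<and> one A \<in> carrier A \<and>
     (\<forall>x\<in>carrier A. cmp A x \<in> carrier A) \<and>
     (\<forall>x\<in>carrier A. \<forall>y\<in>carrier A. join A x y \<in> carrier A \<and> meet A x y \<in> carrier A)"

definition bounded_lattice_alg :: "'a cl_alg \<Rightarrow> bool" where
  "bounded_lattice_alg A \<longleftrightarrow> closed_alg A \<and>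
     (\<forall>x\<in>carrier A. \<forall>y\<in>carrier A. \<forall>z\<in>carrier A.
        join A x (join A y z) = join A (join A x y) z \<and>
        meet A x (meet A y z) = meet A (meet A x y) z) \<and>
     (\<forall>x\<in>carrier A. \<forall>y\<in>carrier A.
        join A x y = join A y x \<and> meet A x y = meet A y x \<and>
        join A x (meet A x y) = x \<and> meet A x (join A x y) = x) \<and>
     (\<forall>x\<in>carrier A. join A x (zero A) = x \<and> meet A x (one A) = x)"

definition in_V :: "'a cl_alg \<Rightarrow> bool" where
  "in_V A \<longleftrightarrow> bounded_lattice_alg A \<and>
     (\<forall>x\<in>carrier A. join A x (cmp A x) = one A \<and> meet A x (cmp A x) = zero A) \<and>
     (\<forall>x\<in>carrier A. \<forall>y\<in>carrier A.
        join A x (cmp A y) = join A (cmp A y) (meet A (join A x (cmp A y)) y) \<and>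
        meet A x y = meet A x (join A (meet A x y) (cmp A x)))"

definition congruence :: "'a cl_alg \<Rightarrow> ('a \<times> 'a) set \<Rightarrow> bool" where
  "congruence A \<theta> \<longleftrightarrow> equiv (carrier A) \<theta> \<and>
     (\<forall>x y. (x, y) \<in> \<theta> \<longrightarrow> (cmp A x, cmp A y) \<in> \<theta>) \<and>
     (\<forall>x y u v. (x, y) \<in> \<theta> \<longrightarrow> (u, v) \<in> \<theta> \<longrightarrow>
        (join A x u, join A y v) \<in> \<theta> \<and> (meet A x u, meet A y v) \<in> \<theta>)"

definition subdirectly_irreducible :: "'a cl_alg \<Rightarrow> bool" where
  "subdirectly_irreducible A \<longleftrightarrow>
     (\<exists>\<mu>. congruence A \<mu> \<and> \<mu> \<noteq> Id_on (carrier A) \<and>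
        (\<forall>\<psi>. congruence A \<psi> \<and> \<psi> \<noteq> Id_on (carrier A) \<longrightarrow> \<mu> \<subseteq> \<psi>))"

definition isomorphic :: "'a cl_alg \<Rightarrow> 'b cl_alg \<Rightarrow> bool" where
  "isomorphic A B \<longleftrightarrow> (\<exists>f. bij_betw f (carrier A) (carrier B) \<and>
     f (zero A) = zero B \<and> f (one A) = one B \<and>
     (\<forall>x\<in>carrier A. f (cmp A x) = cmp B (f x)) \<and>
     (\<forall>x\<in>carrier A. \<forall>y\<in>carrier A.
        f (join A x y) = join B (f x) (f y) \<and> f (meet A x y) = meet B (f x) (f y)))"

datatype mn_elem = Bot | Atom nat | Top

definition mn_join :: "mn_elem \<Rightarrow> mn_elem \<Rightarrow> mn_elem" where
  "mn_join x y = (if x = y then x else if x = Bot then y else if y = Bot then x else Top)"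

definition mn_meet :: "mn_elem \<Rightarrow> mn_elem \<Rightarrow> mn_elem" where
  "mn_meet x y = (if x = y then x else if x = Top then y else if y = Top then x else Bot)"

fun mn_cmp :: "(nat \<Rightarrow> nat) \<Rightarrow> mn_elem \<Rightarrow> mn_elem" where
  "mn_cmp \<pi> Bot = Top"
| "mn_cmp \<pi> Top = Bot"
| "mn_cmp \<pi> (Atom i) = Atom (\<pi> i)"

definition Mn :: "nat \<Rightarrow> (nat \<Rightarrow> nat) \<Rightarrow> mn_elem cl_alg" where
  "Mn n \<pi> = \<lparr> carrier = {Bot, Top} \<union> Atom ` {1..n}, join = mn_join, meet = mn_meet,
              cmp = mn_cmp \<pi>, zero = Bot, one = Top \<rparr>"

definition derangement :: "nat \<Rightarrow> (nat \<Rightarrow> nat) \<Rightarrow> bool" where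
  "derangement n \<pi> \<longleftrightarrow> bij_betw \<pi> {1..n} {1..n} \<and> (\<forall>i\<in>{1..n}. \<pi> i \<noteq> i)"

end

theory Submission imports Defs begin

text \<open>Every congruence of \<open>M_n\<close> identifying two distinct elements identifies \<open>0\<close> and \<open>1\<close>,
  so the total relation is the monolith. If \<open>0 \<equiv> a_i\<close>, complementing gives \<open>1 \<equiv> a_(\<pi> i)\<close>;
  meeting with an atom \<open>a_k\<close>, \<open>k \<notin> {i, \<pi> i}\<close> (this is where \<open>n \<ge> 3\<close> is needed), gives
  \<open>a_k \<equiv> 0\<close>, and joining with \<open>a_i\<close> then gives \<open>a_i \<equiv> 1\<close>, hence \<open>0 \<equiv> 1\<close>. Every other
  nontrivial pair reduces to this one by complementation or by meeting with an atom. The algebras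
  \<open>M_n\<close>, \<open>n \<ge> 3\<close>, with the cyclic shift as complementation have pairwise different sizes.\<close>

lemma congruence_refl: "congruence A \<theta> \<Longrightarrow> x \<in> carrier A \<Longrightarrow> (x, x) \<in> \<theta>"
  unfolding congruence_def equiv_def refl_on_def by blast

lemma congruence_sym: "congruence A \<theta> \<Longrightarrow> (x, y) \<in> \<theta> \<Longrightarrow> (y, x) \<in> \<theta>"
  unfolding congruence_def equiv_def sym_def by blast

lemma congruence_trans: "congruence A \<theta> \<Longrightarrow> (x, y) \<in> \<theta> \<Longrightarrow> (y, z) \<in> \<theta> \<Longrightarrow> (x, z) \<in> \<theta>"
  unfolding congruence_def equiv_def trans_def by blast

lemma congruence_subset: "congruence A \<theta> \<Longrightarrow> \<theta> \<subseteq> carrier A \<times> carrier A"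
  unfolding congruence_def equiv_def refl_on_def by blast

lemma congruence_cmp: "congruence A \<theta> \<Longrightarrow> (x, y) \<in> \<theta> \<Longrightarrow> (cmp A x, cmp A y) \<in> \<theta>"
  unfolding congruence_def by blast

lemma congruence_join:
  "congruence A \<theta> \<Longrightarrow> (x, y) \<in> \<theta> \<Longrightarrow> (u, v) \<in> \<theta> \<Longrightarrow> (join A x u, join A y v) \<in> \<theta>"
  unfolding congruence_def by blast

lemma congruence_meet:
  "congruence A \<theta> \<Longrightarrow> (x, y) \<in> \<theta> \<Longrightarrow> (u, v) \<in> \<theta> \<Longrightarrow> (meet A x u, meet A y v) \<in> \<theta>"
  unfolding congruence_def by blast

lemma congruence_total: "closed_alg A \<Longrightarrow> congruence A (carrier A \<times> carrier A)"
  unfolding congruence_def closed_alg_def by (auto simp: equiv_def refl_on_def sym_def trans_def)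

lemma congruence_zero_one_total:
  assumes A: "bounded_lattice_alg A" and \<theta>: "congruence A \<theta>" and "(zero A, one A) \<in> \<theta>"
  shows "\<theta> = carrier A \<times> carrier A"
proof
  show "\<theta> \<subseteq> carrier A \<times> carrier A" using \<theta> by (rule congruence_subset)
  have "(zero A, x) \<in> \<theta>" if x: "x \<in> carrier A" for x
  proof -
    have zero: "zero A \<in> carrier A"
      using A by (simp add: bounded_lattice_alg_def closed_alg_def)
    have "join A (zero A) x = x"
      using A x zero unfolding bounded_lattice_alg_def by metis
    moreover have "meet A (zero A) (join A (zero A) x) = zero A"
      using A x zero unfolding bounded_lattice_alg_def by blast
    ultimately have meet_zero: "meet A (zero A) x = zero A" by simp
    have meet_one: "meet A (one A) x = x"
      using A x unfolding bounded_lattice_alg_def closed_alg_def by metis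
    show ?thesis
      using congruence_meet[OF \<theta> \<open>(zero A, one A) \<in> \<theta>\<close> congruence_refl[OF \<theta> x]]
      by (simp add: meet_zero meet_one)
  qed
  then show "carrier A \<times> carrier A \<subseteq> \<theta>"
    using congruence_sym[OF \<theta>] congruence_trans[OF \<theta>] by blast
qed

lemma subdirectly_irreducibleI_collapse:
  assumes A: "bounded_lattice_alg A" and "zero A \<noteq> one A"
    and collapse: "\<And>\<theta> x y. congruence A \<theta> \<Longrightarrow> (x, y) \<in> \<theta> \<Longrightarrow> x \<noteq> y \<Longrightarrow> (zero A, one A) \<in> \<theta>"
  shows "subdirectly_irreducible A"
  unfolding subdirectly_irreducible_def
proof (intro exI conjI allI impI)
  have closed: "closed_alg A" using A by (simp add: bounded_lattice_alg_def)
  show "congruence A (carrier A \<times> carrier A)" using closed by (rule congruence_total)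
  show "carrier A \<times> carrier A \<noteq> Id_on (carrier A)"
    using closed \<open>zero A \<noteq> one A\<close> by (auto simp: closed_alg_def Id_on_def)
  fix \<theta> assume "congruence A \<theta> \<and> \<theta> \<noteq> Id_on (carrier A)"
  then have \<theta>: "congruence A \<theta>" and "\<theta> \<noteq> Id_on (carrier A)" by blast+
  have "Id_on (carrier A) \<subseteq> \<theta>" using congruence_refl[OF \<theta>] by auto
  with \<open>\<theta> \<noteq> Id_on (carrier A)\<close> obtain x y where "(x, y) \<in> \<theta>" "(x, y) \<notin> Id_on (carrier A)"
    by (metis subrelI subset_antisym)
  moreover have "x \<noteq> y" using calculation congruence_subset[OF \<theta>] by (auto simp: Id_on_iff)
  ultimately show "carrier A \<times> carrier A \<subseteq> \<theta>"
    using congruence_zero_one_total[OF A \<theta>] collapse[OF \<theta>] by blast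
qed

lemma isomorphic_card_eq: "isomorphic A B \<Longrightarrow> card (carrier A) = card (carrier B)"
  unfolding isomorphic_def using bij_betw_same_card by blast


lemma exists_index_avoiding:
  fixes n :: nat
  assumes "3 \<le> n" shows "\<exists>k\<in>{1..n}. k \<noteq> i \<and> k \<noteq> j"
proof -
  have "card {1..n} - card {i, j} \<le> card ({1..n} - {i, j})"
    by (rule diff_card_le_card_Diff) simp
  moreover have "card {i, j} \<le> 2" by (simp add: card_insert_le_m1)
  ultimately have "0 < card ({1..n} - {i, j})" using assms by simp
  then obtain k where "k \<in> {1..n} - {i, j}" by (metis card_gt_0_iff ex_in_conv)
  then show ?thesis by blast
qed

lemma derangement_range: "derangement n \<pi> \<Longrightarrow> i \<in> {1..n} \<Longrightarrow> \<pi> i \<in> {1..n}"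
  unfolding derangement_def bij_betw_def by blast

lemma carrier_Mn: "carrier (Mn n \<pi>) = {Bot, Top} \<union> Atom ` {1..n}"
  by (simp add: Mn_def)

lemma finite_carrier_Mn: "finite (carrier (Mn n \<pi>))"
  by (simp add: carrier_Mn)

lemma card_carrier_Mn: "card (carrier (Mn n \<pi>)) = n + 2"
proof -
  have "card (Atom ` {1..n}) = n" by (simp add: card_image inj_on_def)
  moreover have "carrier (Mn n \<pi>) = insert Bot (insert Top (Atom ` {1..n}))"
    by (auto simp: carrier_Mn)
  moreover have "Bot \<notin> Atom ` {1..n}" "Top \<notin> Atom ` {1..n}" by auto
  ultimately show ?thesis by simp
qed

lemma Mn_in_V: assumes "derangement n \<pi>" shows "in_V (Mn n \<pi>)"
proof -
  have \<pi>_atom: "Suc 0 \<le> \<pi> i" "\<pi> i \<le> n" "\<pi> i \<noteq> i" "i \<noteq> \<pi> i"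
    if "Suc 0 \<le> i" "i \<le> n" for i
  proof -
    have "i \<in> {1..n}" using that by simp
    then show "Suc 0 \<le> \<pi> i" "\<pi> i \<le> n" "\<pi> i \<noteq> i" "i \<noteq> \<pi> i"
      using derangement_range[OF assms] assms unfolding derangement_def by fastforce+
  qed
  show ?thesis
    unfolding in_V_def bounded_lattice_alg_def closed_alg_def
    by (simp add: Mn_def mn_join_def mn_meet_def, safe, auto simp: \<pi>_atom image_iff)
qed

context
  fixes n \<pi> \<theta>
  assumes n: "3 \<le> n" and \<pi>: "derangement n \<pi>" and \<theta>: "congruence (Mn n \<pi>) \<theta>"
begin

lemma Mn_collapse_Bot_Atom:
  assumes "(Bot, Atom i) \<in> \<theta>" "i \<in> {1..n}"
  shows "(Bot, Top) \<in> \<theta>"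
proof -
  obtain k where k: "k \<in> {1..n}" "k \<noteq> i" "k \<noteq> \<pi> i"
    using exists_index_avoiding[OF n] by blast
  have refl: "(Atom j, Atom j) \<in> \<theta>" if "j \<in> {1..n}" for j
    using congruence_refl[OF \<theta>] that by (simp add: carrier_Mn)
  have "(Top, Atom (\<pi> i)) \<in> \<theta>"
    using congruence_cmp[OF \<theta> assms(1)] by (simp add: Mn_def)
  then have "(Atom k, Bot) \<in> \<theta>"
    using congruence_meet[OF \<theta> _ refl[OF k(1)]] k(3) by (fastforce simp: Mn_def mn_meet_def)
  then have "(Atom i, Top) \<in> \<theta>"
    using congruence_join[OF \<theta> congruence_sym[OF \<theta>] refl[OF assms(2)]] k(2)
    by (fastforce simp: Mn_def mn_join_def)
  then show ?thesis using congruence_trans[OF \<theta> assms(1)] by blast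
qed

lemma Mn_collapse_Atom_Top:
  assumes "(Atom i, Top) \<in> \<theta>" "i \<in> {1..n}"
  shows "(Bot, Top) \<in> \<theta>"
proof -
  have "(Atom (\<pi> i), Bot) \<in> \<theta>"
    using congruence_cmp[OF \<theta> assms(1)] by (simp add: Mn_def)
  then show ?thesis
    using Mn_collapse_Bot_Atom congruence_sym[OF \<theta>] derangement_range[OF \<pi> assms(2)] by blast
qed

lemma Mn_collapse:
  assumes xy: "(x, y) \<in> \<theta>" "x \<noteq> y"
  shows "(Bot, Top) \<in> \<theta>"
proof -
  have x: "x \<in> carrier (Mn n \<pi>)" and y: "y \<in> carrier (Mn n \<pi>)"
    using congruence_subset[OF \<theta>] xy(1) by auto
  have yx: "(y, x) \<in> \<theta>" using congruence_sym[OF \<theta> xy(1)] .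
  have "(meet (Mn n \<pi>) x x, meet (Mn n \<pi>) y x) \<in> \<theta>"
    using congruence_meet[OF \<theta> xy(1) congruence_refl[OF \<theta> x]] .
  then have distinct_atoms: "(Atom i, Bot) \<in> \<theta>" if "x = Atom i" "y = Atom j" for i j
    using that xy(2) by (simp add: Mn_def mn_meet_def)
  show ?thesis
  proof (cases x)
    case Bot
    then show ?thesis
      using xy y Mn_collapse_Bot_Atom by (cases y) (auto simp: carrier_Mn)
  next
    case Top
    then show ?thesis
      using xy yx y Mn_collapse_Atom_Top by (cases y) (auto simp: carrier_Mn)
  next
    case (Atom i)
    then have i: "i \<in> {1..n}" using x by (auto simp: carrier_Mn)
    show ?thesis
    proof (cases y)
      case Bot
      then show ?thesis using Atom yx i Mn_collapse_Bot_Atom by blast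
    next
      case Top
      then show ?thesis using Atom xy i Mn_collapse_Atom_Top by blast
    next
      case (Atom j)
      then show ?thesis
        using distinct_atoms \<open>x = Atom i\<close> i congruence_sym[OF \<theta>] Mn_collapse_Bot_Atom by blast
    qed
  qed
qed

end

lemma Mn_subdirectly_irreducible:
  assumes "3 \<le> n" "derangement n \<pi>"
  shows "subdirectly_irreducible (Mn n \<pi>)"
proof (rule subdirectly_irreducibleI_collapse)
  show "bounded_lattice_alg (Mn n \<pi>)" using Mn_in_V[OF assms(2)] by (simp add: in_V_def)
  show "zero (Mn n \<pi>) \<noteq> one (Mn n \<pi>)" by (simp add: Mn_def)
  show "(zero (Mn n \<pi>), one (Mn n \<pi>)) \<in> \<theta>"
    if "congruence (Mn n \<pi>) \<theta>" "(x, y) \<in> \<theta>" "x \<noteq> y" for \<theta> x y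
    using Mn_collapse[OF assms that] by (simp add: Mn_def)
qed

definition cyclic_shift :: "nat \<Rightarrow> nat \<Rightarrow> nat" where
  "cyclic_shift n i = (if i = n then 1 else Suc i)"

lemma derangement_cyclic_shift:
  assumes "2 \<le> n" shows "derangement n (cyclic_shift n)"
proof -
  have "inj_on (cyclic_shift n) {1..n}"
    by (auto simp: inj_on_def cyclic_shift_def split: if_splits)
  moreover have "cyclic_shift n ` {1..n} \<subseteq> {1..n}"
    using assms by (auto simp: cyclic_shift_def)
  ultimately have "cyclic_shift n ` {1..n} = {1..n}"
    by (simp add: endo_inj_surj)
  then show ?thesis
    using assms \<open>inj_on (cyclic_shift n) {1..n}\<close>
    by (auto simp: derangement_def bij_betw_def cyclic_shift_def)
qed

theorem mainTheorem10:
  shows "(\<forall>n \<pi>. n \<ge> 3 \<and> derangement n \<pi> \<longrightarrow>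
            finite (carrier (Mn n \<pi>)) \<and> in_V (Mn n \<pi>) \<and> subdirectly_irreducible (Mn n \<pi>))
       \<and> (\<exists>F :: nat \<Rightarrow> mn_elem cl_alg.
            (\<forall>k. finite (carrier (F k)) \<and> in_V (F k) \<and> subdirectly_irreducible (F k)) \<and>
            (\<forall>k l. k \<noteq> l \<longrightarrow> \<not> isomorphic (F k) (F l)))"
proof (intro conjI)
  show "\<forall>n \<pi>. n \<ge> 3 \<and> derangement n \<pi> \<longrightarrow>
      finite (carrier (Mn n \<pi>)) \<and> in_V (Mn n \<pi>) \<and> subdirectly_irreducible (Mn n \<pi>)"
    by (simp add: finite_carrier_Mn Mn_in_V Mn_subdirectly_irreducible)
  let ?F = "\<lambda>k. Mn (k + 3) (cyclic_shift (k + 3))"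
  have "derangement (k + 3) (cyclic_shift (k + 3))" for k
    by (rule derangement_cyclic_shift) simp
  then have "finite (carrier (?F k)) \<and> in_V (?F k) \<and> subdirectly_irreducible (?F k)" for k
    by (simp add: finite_carrier_Mn Mn_in_V Mn_subdirectly_irreducible)
  moreover have "\<not> isomorphic (?F k) (?F l)" if "k \<noteq> l" for k l
    using that isomorphic_card_eq[of "?F k" "?F l"] by (auto simp: card_carrier_Mn)
  ultimately show "\<exists>F :: nat \<Rightarrow> mn_elem cl_alg.
      (\<forall>k. finite (carrier (F k)) \<and> in_V (F k) \<and> subdirectly_irreducible (F k)) \<and>
      (\<forall>k l. k \<noteq> l \<longrightarrow> \<not> isomorphic (F k) (F l))"
    by (intro exI[of _ ?F]) blast
qed

end
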